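(* In the setting of the context, the set $\{g^*(z) : g \in G\}$ is a $k(Y)$-basis of $k(X)$.
   Context: Let $k$ be an algebraically closed field of characteristic $p>0$, $G$ a finite $p$-group acting faithfully on a smooth projective curve $X$ over $k$, $Y := X/G$, $\pi : X\to Y$ the quotient map. For $P\in X(k)$ let $G_{P,i}$ be the lower ramification groups, $G_P$ the stabilizer, $d'_P := \sum_{i\ge1}(\#G_{P,i}-1)$. Assume: (A) $G_P$ is normal in $G$ for all $P\in X(k)$; (B) $z \in k(X)$ satisfies $\mathrm{ord}_P(z) \ge -d'_P$ for all $P \in X(k)$ and $\mathrm{tr}_{k(X)/k(Y)}(z) \neq 0$. *)

theory Defs
  imports "HOL-Computational_Algebra.Polynomial"
begin

text \<open>Smooth projective curves over an algebraically closed field k are encoded by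
their function fields: K = k(X) is a field (the type 'K) containing k as a subfield
kk, and K is a function field in one variable over kk.  Closed points of X are the
normalized discrete valuations of K trivial on kk.  Automorphisms of X correspond to
kk-automorphisms of K.\<close>

definition subfield :: "'a::field set \<Rightarrow> bool" where
  "subfield F \<longleftrightarrow> 0 \<in> F \<and> 1 \<in> F \<and> (\<forall>x\<in>F. \<forall>y\<in>F. x + y \<in> F \<and> x * y \<in> F)
     \<and> (\<forall>x\<in>F. - x \<in> F \<and> inverse x \<in> F)"

definition poly_over :: "'a::field set \<Rightarrow> 'a poly \<Rightarrow> bool" where
  "poly_over F q \<longleftrightarrow> (\<forall>i. coeff q i \<in> F)"

definition alg_closed_field :: "'a::field set \<Rightarrow> bool" where
  "alg_closed_field F \<longleftrightarrow>
     (\<forall>q. poly_over F q \<and> degree q \<ge> 1 \<longrightarrow> (\<exists>x\<in>F. poly q x = 0))"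

definition span_over :: "'a::field set \<Rightarrow> 'a set \<Rightarrow> 'a \<Rightarrow> bool" where
  "span_over F B y \<longleftrightarrow> (\<exists>S c. finite S \<and> S \<subseteq> B \<and> (\<forall>b\<in>S. c b \<in> F)
       \<and> y = (\<Sum>b\<in>S. c b * b))"

definition lin_indep_over :: "'a::field set \<Rightarrow> 'a set \<Rightarrow> bool" where
  "lin_indep_over F B \<longleftrightarrow> (\<forall>S c. finite S \<and> S \<subseteq> B \<and> (\<forall>b\<in>S. c b \<in> F)
       \<and> (\<Sum>b\<in>S. c b * b) = 0 \<longrightarrow> (\<forall>b\<in>S. c b = 0))"

definition basis_over :: "'a::field set \<Rightarrow> 'a set \<Rightarrow> bool" where
  "basis_over F B \<longleftrightarrow> lin_indep_over F B \<and> (\<forall>y. span_over F B y)"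

definition finite_dim_over :: "'a::field set \<Rightarrow> bool" where
  "finite_dim_over F \<longleftrightarrow> (\<exists>B. finite B \<and> basis_over F B)"

definition transcendental_over :: "'a::field set \<Rightarrow> 'a \<Rightarrow> bool" where
  "transcendental_over F t \<longleftrightarrow> (\<forall>q. poly_over F q \<and> poly q t = 0 \<longrightarrow> q = 0)"

definition rat_fun_field :: "'a::field set \<Rightarrow> 'a \<Rightarrow> 'a set" where
  "rat_fun_field F t = {poly a t / poly b t | a b. poly_over F a \<and> poly_over F b \<and> poly b t \<noteq> 0}"

definition function_field_1 :: "'a::field set \<Rightarrow> bool" where
  "function_field_1 F \<longleftrightarrow> subfield F \<and>
     (\<exists>t. transcendental_over F t \<and> finite_dim_over (rat_fun_field F t))"

text \<open>A point P of X(k): the normalized discrete valuation ord_P of K, trivial on k.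
  (Value at 0 is normalized to 0; ord_P(0) = \<infinity> is treated separately.)\<close>
definition place :: "'a::field set \<Rightarrow> ('a \<Rightarrow> int) \<Rightarrow> bool" where
  "place F v \<longleftrightarrow> v 0 = 0
     \<and> (\<forall>x y. x \<noteq> 0 \<longrightarrow> y \<noteq> 0 \<longrightarrow> v (x * y) = v x + v y)
     \<and> (\<forall>x y. x \<noteq> 0 \<longrightarrow> y \<noteq> 0 \<longrightarrow> x + y \<noteq> 0 \<longrightarrow> v (x + y) \<ge> min (v x) (v y))
     \<and> (\<forall>c\<in>F. c \<noteq> 0 \<longrightarrow> v c = 0)
     \<and> (\<exists>t. t \<noteq> 0 \<and> v t = 1)"

definition F_automorphism :: "'a::field set \<Rightarrow> ('a \<Rightarrow> 'a) \<Rightarrow> bool" where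
  "F_automorphism F s \<longleftrightarrow> bij s \<and> (\<forall>x y. s (x + y) = s x + s y \<and> s (x * y) = s x * s y)
     \<and> (\<forall>c\<in>F. s c = c)"

text \<open>G is a finite group of F-automorphisms (acting faithfully by construction).\<close>
definition finite_aut_group :: "'a::field set \<Rightarrow> ('a \<Rightarrow> 'a) set \<Rightarrow> bool" where
  "finite_aut_group F G \<longleftrightarrow> finite G \<and> id \<in> G \<and> (\<forall>s\<in>G. F_automorphism F s)
     \<and> (\<forall>s\<in>G. \<forall>t\<in>G. s \<circ> t \<in> G) \<and> (\<forall>s\<in>G. inv s \<in> G)"

text \<open>k(Y) = k(X)^G.\<close>
definition fixed_field :: "('a \<Rightarrow> 'a) set \<Rightarrow> 'a set" where
  "fixed_field G = {x. \<forall>s\<in>G. s x = x}"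

text \<open>Trace of the Galois extension k(X)/k(X)^G (Galois group G by Artin's theorem).\<close>
definition trace_G :: "('a \<Rightarrow> 'a::field) set \<Rightarrow> 'a \<Rightarrow> 'a" where
  "trace_G G z = (\<Sum>s\<in>G. s z)"

definition stab :: "('a \<Rightarrow> 'a) set \<Rightarrow> ('a \<Rightarrow> int) \<Rightarrow> ('a \<Rightarrow> 'a) set" where
  "stab G v = {s\<in>G. \<forall>x. v (s x) = v x}"

definition val_ring :: "('a::field \<Rightarrow> int) \<Rightarrow> 'a set" where
  "val_ring v = {f. f = 0 \<or> v f \<ge> 0}"

definition ram_group :: "('a::field \<Rightarrow> 'a) set \<Rightarrow> ('a \<Rightarrow> int) \<Rightarrow> nat \<Rightarrow> ('a \<Rightarrow> 'a) set" where
  "ram_group G v i = {s\<in>stab G v. \<forall>f\<in>val_ring v. s f = f \<or> v (s f - f) \<ge> int i + 1}"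

definition d_prime :: "('a::field \<Rightarrow> 'a) set \<Rightarrow> ('a \<Rightarrow> int) \<Rightarrow> nat" where
  "d_prime G v = (\<Sum>i\<in>{i. 1 \<le> i \<and> 1 < card (ram_group G v i)}. card (ram_group G v i) - 1)"

end

(*
  Let L = k(X)^G. The conjugates g z form an L-basis of k(X) as soon as the matrix
  ((h o g) z) indexed by h, g in G is nonsingular: applying each h to an L-linear relation
  among the g z gives a kernel vector, and for any y the unique solution of the system
  sum_g (h o g) z * x_g = h y is G-invariant, so it has coefficients in L.

  Nonsingularity is where the p-group enters. The kernel is stable under left translation
  by G. If it contained some x /= 0, the additive span of the G-orbit of x would be a finite
  F_p-space on which both G and translation by x act; counting fixed points of these p-group
  actions modulo p yields a nonzero translation-invariant, hence constant, kernel vector c,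
  and its row h = id reads c * Tr(z) = 0.

  Only |G| = p^n and Tr(z) /= 0 are used.
*)
theory Submission
  imports Defs "Jordan_Normal_Form.Determinant" "HOL-Algebra.Group_Action"
    "HOL-Algebra.Elementary_Groups" "HOL-Library.Function_Algebras"
begin

lemma of_nat_mod_char:
  assumes "of_nat p = (0 :: 'a::semiring_1)"
  shows "of_nat (m mod p) = (of_nat m :: 'a)"
proof -
  have "(of_nat m :: 'a) = of_nat (m mod p + p * (m div p))" by simp
  also have "\<dots> = of_nat (m mod p)" by (simp only: of_nat_add of_nat_mult assms) simp
  finally show ?thesis by simp
qed

lemma of_int_mod_char:
  assumes "of_nat p = (0 :: 'a::ring_1)"
  shows "of_int (a mod int p) = (of_int a :: 'a)"
proof -
  have "(of_int a :: 'a) = of_int (a mod int p + int p * (a div int p))" by simp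
  also have "\<dots> = of_int (a mod int p)"
    by (simp only: of_int_add of_int_mult of_int_of_nat_eq assms) simp
  finally show ?thesis by simp
qed

lemma additive_of_nat_mult:
  fixes f :: "'a::ring_1 \<Rightarrow> 'b::ring_1"
  assumes "additive f"
  shows "f (of_nat n * x) = of_nat n * f x"
  by (induction n) (simp_all add: additive.zero[OF assms] additive.add[OF assms] distrib_right)

lemma (in group) group_action_restrict:
  assumes closed: "\<And>g s. g \<in> carrier G \<Longrightarrow> s \<in> S \<Longrightarrow> act g s \<in> S"
    and one: "\<And>s. s \<in> S \<Longrightarrow> act \<one> s = s"
    and mult: "\<And>g h s. \<lbrakk>g \<in> carrier G; h \<in> carrier G; s \<in> S\<rbrakk> \<Longrightarrow> act (g \<otimes> h) s = act g (act h s)"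
  shows "group_action G S (\<lambda>g. restrict (act g) S)"
proof -
  have Bij: "restrict (act g) S \<in> Bij S" if g: "g \<in> carrier G" for g
  proof -
    have "act (inv g) (act g s) = s" "act g (act (inv g) s) = s" if "s \<in> S" for s
      using mult[of "inv g" g s] mult[of g "inv g" s] one closed that g by simp_all
    then have "bij_betw (act g) S S"
      using closed g by (intro bij_betwI[where g = "act (inv g)"]) auto
    then show ?thesis by (simp add: Bij_def)
  qed
  have "restrict (act (g \<otimes> h)) S = restrict (act g) S \<otimes>\<^bsub>BijGroup S\<^esub> restrict (act h) S"
    if "g \<in> carrier G" "h \<in> carrier G" for g h
    using Bij that by (auto simp: BijGroup_def compose_def mult closed intro!: restrict_ext)
  then show ?thesis
    unfolding group_action_def group_hom_def group_hom_axioms_def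
    using Bij group_BijGroup is_group by (auto intro!: homI simp: BijGroup_def)
qed

lemma (in group_action) card_fixed_points_cong:
  assumes "finite E" and "order G = p ^ n" and "prime p"
  shows "card E mod p = card {x \<in> E. \<forall>g \<in> carrier G. \<phi> g x = x} mod p"
proof -
  define Fix where "Fix = {x \<in> E. \<forall>g \<in> carrier G. \<phi> g x = x}"
  have orbit_eq: "orbit G \<phi> x = {\<phi> g x | g. g \<in> carrier G}" for x
    by (auto simp: orbit_def)
  have orbit_Fix: "orbit G \<phi> x = {x}" if "x \<in> Fix" for x
    using that orbit_refl unfolding orbit_eq Fix_def by auto
  have card_orbit_mod: "card Orb mod p = (if card Orb = 1 then 1 else 0)"
    if Orb: "Orb \<in> orbits G E \<phi>" for Orb
  proof -
    obtain x where x: "x \<in> E" "Orb = orbit G \<phi> x" using Orb by (auto simp: orbits_def)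
    have "card Orb dvd p ^ n"
      using orbit_stabilizer_theorem[OF x(1)] x(2) assms(2) by (metis dvd_triv_left)
    then obtain i where "card Orb = p ^ i" using divides_primepow_nat[OF assms(3)] by auto
    then show ?thesis using assms(3) by (cases i) (auto simp: prime_gt_1_nat)
  qed
  have "card E = (\<Sum>Orb \<in> orbits G E \<phi>. card Orb)"
    using disjoint_sum[OF assms(1), of "\<lambda>_. 1 :: nat"] by simp
  then have "card E mod p = (\<Sum>Orb \<in> orbits G E \<phi>. card Orb mod p) mod p"
    by (simp add: mod_sum_eq)
  also have "(\<Sum>Orb \<in> orbits G E \<phi>. card Orb mod p) = (\<Sum>Orb \<in> orbits G E \<phi>. if card Orb = 1 then 1 else 0)"
    using card_orbit_mod by (rule sum.cong[OF refl])
  also have "\<dots> = card {Orb \<in> orbits G E \<phi>. card Orb = 1}"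
    using assms(1) by (simp add: orbits_def flip: sum.inter_filter)
  also have "{Orb \<in> orbits G E \<phi>. card Orb = 1} = (\<lambda>x. {x}) ` Fix"
  proof (intro equalityI subsetI)
    fix Orb assume "Orb \<in> {Orb \<in> orbits G E \<phi>. card Orb = 1}"
    then obtain x where x: "x \<in> E" "Orb = orbit G \<phi> x" "card Orb = 1" by (auto simp: orbits_def)
    then have "Orb = {x}" using orbit_refl by (metis card_1_singletonE singletonD)
    then have "x \<in> Fix" using x unfolding orbit_eq Fix_def by blast
    then show "Orb \<in> (\<lambda>x. {x}) ` Fix" using \<open>Orb = {x}\<close> by blast
  next
    fix Orb assume "Orb \<in> (\<lambda>x. {x}) ` Fix"
    then show "Orb \<in> {Orb \<in> orbits G E \<phi>. card Orb = 1}"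
      using orbit_Fix by (force simp: orbits_def Fix_def)
  qed
  finally show ?thesis by (simp add: card_image Fix_def)
qed

lemma dvd_card_if_closed_under_shift:
  fixes x :: "'v::ring_1"
  assumes p: "prime p" and char: "of_nat p = (0::'v)"
    and "finite V" and "x \<noteq> 0" and shift: "\<And>v. v \<in> V \<Longrightarrow> v + x \<in> V"
  shows "p dvd card V"
proof -
  define Zp where "Zp = integer_mod_group p"
  have p2: "2 \<le> p" using p by (simp add: prime_ge_2_nat)
  have carrier_Zp: "carrier Zp = {0..<int p}"
    using p2 by (simp add: Zp_def carrier_integer_mod_group)
  have shift_of_nat: "v + of_nat k * x \<in> V" if "v \<in> V" for v k
  proof (induction k)
    case (Suc k)
    have "v + of_nat (Suc k) * x = (v + of_nat k * x) + x" by (simp add: algebra_simps)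
    then show ?case using shift[OF Suc] by (simp only:)
  qed (simp add: that)
  interpret Zp_act: group_action Zp V "\<lambda>a. restrict (\<lambda>v. v + of_int a * x) V"
  proof (rule group.group_action_restrict)
    show "group Zp" by (simp add: Zp_def)
    show "v + of_int a * x \<in> V" if "a \<in> carrier Zp" "v \<in> V" for a v
      using shift_of_nat[OF that(2), of "nat a"] that(1) by (simp add: carrier_Zp)
    show "v + of_int \<one>\<^bsub>Zp\<^esub> * x = v" for v by (simp add: Zp_def)
    show "v + of_int (a \<otimes>\<^bsub>Zp\<^esub> b) * x = (v + of_int b * x) + of_int a * x" for a b v
      by (simp add: Zp_def of_int_mod_char[OF char] algebra_simps)
  qed
  have order_Zp: "order Zp = p ^ 1" by (simp add: order_def carrier_Zp)
  have no_fixed_points: "{v \<in> V. \<forall>a \<in> carrier Zp. restrict (\<lambda>v. v + of_int a * x) V v = v} = {}"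
    using \<open>x \<noteq> 0\<close> p2 by (auto simp: carrier_Zp intro!: bexI[where x = 1])
  show ?thesis
    using Zp_act.card_fixed_points_cong[OF \<open>finite V\<close> order_Zp p]
    unfolding no_fixed_points by (simp add: dvd_eq_mod_eq_0)
qed

lemma (in group) nonzero_fixed_point_of_finite:
  fixes act :: "'a \<Rightarrow> 'v::ring_1 \<Rightarrow> 'v"
  assumes order: "order G = p ^ n" and p: "prime p" and char: "of_nat p = (0::'v)"
    and V: "finite V" "0 \<in> V" "x \<noteq> 0" "\<And>v. v \<in> V \<Longrightarrow> v + x \<in> V"
    and closed: "\<And>g v. g \<in> carrier G \<Longrightarrow> v \<in> V \<Longrightarrow> act g v \<in> V"
    and one: "\<And>v. v \<in> V \<Longrightarrow> act \<one> v = v"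
    and mult: "\<And>g h v. \<lbrakk>g \<in> carrier G; h \<in> carrier G; v \<in> V\<rbrakk> \<Longrightarrow> act (g \<otimes> h) v = act g (act h v)"
    and zero: "\<And>g. g \<in> carrier G \<Longrightarrow> act g 0 = 0"
  obtains y where "y \<in> V" "y \<noteq> 0" "\<And>g. g \<in> carrier G \<Longrightarrow> act g y = y"
proof -
  let ?Fix = "{v \<in> V. \<forall>g \<in> carrier G. act g v = v}"
  interpret G_act: group_action G V "\<lambda>g. restrict (act g) V"
    using closed one mult by (rule group_action_restrict)
  have "{v \<in> V. \<forall>g \<in> carrier G. restrict (act g) V v = v} = ?Fix" by auto
  then have "card V mod p = card ?Fix mod p"
    using G_act.card_fixed_points_cong[OF V(1) order p] by simp
  moreover have "p dvd card V" using dvd_card_if_closed_under_shift[OF p char V(1,3,4)] .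
  ultimately have "p dvd card ?Fix" by (simp add: dvd_eq_mod_eq_0)
  have "\<not> ?Fix \<subseteq> {0}"
  proof
    assume "?Fix \<subseteq> {0}"
    then have "?Fix = {0}" using V(2) zero by auto
    then show False using \<open>p dvd card ?Fix\<close> p by simp
  qed
  then show ?thesis using that by blast
qed

definition nat_combinations :: "'i set \<Rightarrow> ('i \<Rightarrow> 'a::semiring_1) \<Rightarrow> 'a set" where
  "nat_combinations I v = range (\<lambda>c. \<Sum>i\<in>I. of_nat (c i) * v i)"

lemma finite_nat_combinations:
  fixes v :: "'i \<Rightarrow> 'a::semiring_1"
  assumes "finite I" and "of_nat p = (0::'a)" and "p > 0"
  shows "finite (nat_combinations I v)"
proof -
  have "nat_combinations I v \<subseteq> (\<lambda>c. \<Sum>i\<in>I. of_nat (c i) * v i) ` (I \<rightarrow>\<^sub>E {..<p})"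
  proof
    fix w assume "w \<in> nat_combinations I v"
    then obtain c where w: "w = (\<Sum>i\<in>I. of_nat (c i) * v i)" by (auto simp: nat_combinations_def)
    have "w = (\<Sum>i\<in>I. of_nat (restrict (\<lambda>i. c i mod p) I i) * v i)"
      unfolding w by (intro sum.cong refl) (simp add: of_nat_mod_char[OF assms(2)])
    moreover have "restrict (\<lambda>i. c i mod p) I \<in> I \<rightarrow>\<^sub>E {..<p}" using assms(3) by auto
    ultimately show "w \<in> (\<lambda>c. \<Sum>i\<in>I. of_nat (c i) * v i) ` (I \<rightarrow>\<^sub>E {..<p})" by blast
  qed
  then show ?thesis by (rule finite_subset) (simp add: assms(1) finite_PiE)
qed

lemma nat_combinations_add:
  assumes "u \<in> nat_combinations I v" and "w \<in> nat_combinations I v"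
  shows "u + w \<in> nat_combinations I v"
proof -
  obtain c d where "u = (\<Sum>i\<in>I. of_nat (c i) * v i)" "w = (\<Sum>i\<in>I. of_nat (d i) * v i)"
    using assms by (auto simp: nat_combinations_def)
  then show ?thesis unfolding nat_combinations_def
    by (intro range_eqI[where x = "\<lambda>i. c i + d i"]) (simp add: sum.distrib distrib_right)
qed

lemma nat_combinations_generator:
  assumes "finite I" and "i \<in> I"
  shows "v i \<in> nat_combinations I v"
  unfolding nat_combinations_def
  by (rule range_eqI[where x = "\<lambda>j. of_bool (j = i)"]) (simp add: assms if_distrib cong: if_cong)

lemma nat_combinations_subset:
  assumes "0 \<in> W" and add: "\<And>u w. u \<in> W \<Longrightarrow> w \<in> W \<Longrightarrow> u + w \<in> W" and "v ` I \<subseteq> W"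
  shows "nat_combinations I v \<subseteq> W"
proof -
  have multiple: "of_nat n * w \<in> W" if "w \<in> W" for n w
    by (induction n) (simp_all add: assms(1) add that distrib_right)
  have sums: "sum f J \<in> W" if "\<And>i. i \<in> J \<Longrightarrow> f i \<in> W" for J and f :: "'i \<Rightarrow> 'a"
    using that by (induction J rule: infinite_finite_induct) (simp_all add: assms(1) add)
  show ?thesis using assms(3) by (auto simp: nat_combinations_def intro!: sums multiple)
qed

lemma (in group) nat_combinations_orbit_closed:
  fixes act :: "'a \<Rightarrow> 'v::ring_1 \<Rightarrow> 'v"
  assumes g: "g \<in> carrier G" and "additive (act g)"
    and mult: "\<And>h. h \<in> carrier G \<Longrightarrow> act (g \<otimes> h) x = act g (act h x)"
    and "w \<in> nat_combinations (carrier G) (\<lambda>h. act h x)"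
  shows "act g w \<in> nat_combinations (carrier G) (\<lambda>h. act h x)"
proof -
  obtain c where w: "w = (\<Sum>h\<in>carrier G. of_nat (c h) * act h x)"
    using assms(4) by (auto simp: nat_combinations_def)
  define F where "F h = of_nat (c (inv g \<otimes> h)) * act h x" for h
  have "act g w = (\<Sum>h\<in>carrier G. F (g \<otimes> h))"
    unfolding w F_def using assms(2) g
    by (simp add: additive.sum additive_of_nat_mult mult m_assoc[symmetric])
  also have "\<dots> = (\<Sum>h\<in>carrier G. F h)"
    using sum.reindex[OF inj_on_cmult[OF g], of F] surj_const_mult[OF g] by (simp add: comp_def)
  finally show ?thesis by (auto simp: nat_combinations_def F_def)
qed

lemma (in group) additive_action_nonzero_fixed_point:
  fixes act :: "'a \<Rightarrow> 'v::ring_1 \<Rightarrow> 'v"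
  assumes order: "order G = p ^ n" and p: "prime p" and char: "of_nat p = (0::'v)"
    and additive: "\<And>g. g \<in> carrier G \<Longrightarrow> additive (act g)"
    and W: "0 \<in> W" "\<And>u w. u \<in> W \<Longrightarrow> w \<in> W \<Longrightarrow> u + w \<in> W"
    and closed: "\<And>g w. g \<in> carrier G \<Longrightarrow> w \<in> W \<Longrightarrow> act g w \<in> W"
    and one: "\<And>w. w \<in> W \<Longrightarrow> act \<one> w = w"
    and mult: "\<And>g h w. \<lbrakk>g \<in> carrier G; h \<in> carrier G; w \<in> W\<rbrakk> \<Longrightarrow> act (g \<otimes> h) w = act g (act h w)"
    and x: "x \<in> W" "x \<noteq> 0"
  obtains y where "y \<in> W" "y \<noteq> 0" "\<And>g. g \<in> carrier G \<Longrightarrow> act g y = y"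
proof -
  define V where "V = nat_combinations (carrier G) (\<lambda>g. act g x)"
  have "V \<subseteq> W"
    unfolding V_def using W closed x(1) by (intro nat_combinations_subset) auto
  have "finite (carrier G)"
    using order p order_gt_0_iff_finite by (metis prime_gt_0_nat zero_less_power)
  then have "finite V"
    unfolding V_def using char p by (intro finite_nat_combinations) (auto simp: prime_gt_0_nat)
  have "x \<in> V"
    using nat_combinations_generator[OF \<open>finite (carrier G)\<close> one_closed, of "\<lambda>g. act g x"]
    by (simp add: V_def one x(1))
  have "0 \<in> V"
    unfolding V_def nat_combinations_def by (rule range_eqI[where x = "\<lambda>_. 0"]) simp
  show ?thesis
  proof (rule nonzero_fixed_point_of_finite[OF order p char \<open>finite V\<close> \<open>0 \<in> V\<close> x(2)])
    show "v + x \<in> V" if "v \<in> V" for v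
      using that \<open>x \<in> V\<close> unfolding V_def by (rule nat_combinations_add)
    show "act g v \<in> V" if "g \<in> carrier G" "v \<in> V" for g v
      using that \<open>V \<subseteq> W\<close> x(1) additive mult unfolding V_def
      by (intro nat_combinations_orbit_closed) auto
    show "act \<one> v = v" if "v \<in> V" for v using that \<open>V \<subseteq> W\<close> one by blast
    show "act (g \<otimes> h) v = act g (act h v)" if "g \<in> carrier G" "h \<in> carrier G" "v \<in> V" for g h v
      using that \<open>V \<subseteq> W\<close> mult by blast
    show "act g 0 = 0" if "g \<in> carrier G" for g using additive[OF that] by (rule additive.zero)
  qed (use that \<open>V \<subseteq> W\<close> in blast)
qed

unbundle no m_inv_syntax

lemma square_linear_system_solvable:
  fixes A :: "'i \<Rightarrow> 'i \<Rightarrow> 'a::field"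
  assumes "finite I"
    and injective: "\<And>x. \<forall>i\<in>I. (\<Sum>j\<in>I. A i j * x j) = 0 \<Longrightarrow> \<forall>j\<in>I. x j = 0"
  obtains x where "\<And>i. i \<in> I \<Longrightarrow> (\<Sum>j\<in>I. A i j * x j) = b i"
proof -
  define N where "N = card I"
  obtain e where e: "bij_betw e {0..<N} I"
    using ex_bij_betw_nat_finite[OF assms(1)] by (auto simp: N_def)
  have e_in: "e k \<in> I" if "k < N" for k using e that by (auto dest: bij_betwE)
  have inv_e: "inv_into {0..<N} e (e k) = k" if "k < N" for k
    using that bij_betw_imp_inj_on[OF e] by simp
  define M where "M = mat N N (\<lambda>(k, l). A (e k) (e l))"
  have M: "M \<in> carrier_mat N N" by (simp add: M_def)
  define to_fun where "to_fun v j = v $ inv_into {0..<N} e j" for v :: "'a vec" and j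
  have row: "(M *\<^sub>v v) $ k = (\<Sum>j\<in>I. A (e k) j * to_fun v j)" if "k < N" "v \<in> carrier_vec N" for k v
  proof -
    have "(M *\<^sub>v v) $ k = (\<Sum>l\<in>{0..<N}. A (e k) (e l) * to_fun v (e l))"
      using that by (simp add: M_def scalar_prod_def to_fun_def inv_e)
    also have "\<dots> = (\<Sum>j\<in>I. A (e k) j * to_fun v j)"
      by (rule sum.reindex_bij_betw[OF e])
    finally show ?thesis .
  qed
  have "v = 0\<^sub>v N" if v: "v \<in> carrier_vec N" and Mv: "M *\<^sub>v v = 0\<^sub>v N" for v
  proof -
    have "\<forall>i\<in>I. (\<Sum>j\<in>I. A i j * to_fun v j) = 0"
    proof
      fix i assume "i \<in> I"
      then obtain k where "k < N" "i = e k" using e by (auto simp: bij_betw_def)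
      then show "(\<Sum>j\<in>I. A i j * to_fun v j) = 0" using row[OF _ v] Mv by simp
    qed
    then have "to_fun v (e k) = 0" if "k < N" for k using injective e_in[OF that] by blast
    then show ?thesis using v by (intro eq_vecI) (simp_all add: to_fun_def inv_e)
  qed
  then have "det M \<noteq> 0" using det_0_iff_vec_prod_zero_field[OF M] by auto
  then obtain B where B: "B \<in> carrier_mat N N" "M * B = 1\<^sub>m N"
    using det_non_zero_imp_unit[OF M, of "()"] by (auto simp: Units_def ring_mat_def)
  define v where "v = B *\<^sub>v vec N (\<lambda>k. b (e k))"
  have v: "v \<in> carrier_vec N" using B(1) by (simp add: v_def)
  have "M *\<^sub>v v = vec N (\<lambda>k. b (e k))"
    using B M by (simp add: v_def assoc_mult_mat_vec[symmetric, of M N N B N])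
  then have "(\<Sum>j\<in>I. A i j * to_fun v j) = b i" if "i \<in> I" for i
    using that e row[OF _ v] by (auto simp: bij_betw_def)
  then show ?thesis by (rule that)
qed

definition comp_monoid :: "('a \<Rightarrow> 'a) set \<Rightarrow> ('a \<Rightarrow> 'a) monoid" where
  "comp_monoid G = \<lparr>carrier = G, monoid.mult = (\<circ>), one = id\<rparr>"

locale field_aut_group =
  fixes G :: "('K::field \<Rightarrow> 'K) set"
  assumes finite_G: "finite G" and id_in_G: "id \<in> G"
    and comp_in_G: "s \<in> G \<Longrightarrow> t \<in> G \<Longrightarrow> s \<circ> t \<in> G"
    and inv_in_G: "s \<in> G \<Longrightarrow> inv s \<in> G"
    and bij_G: "s \<in> G \<Longrightarrow> bij s"
    and add_G: "s \<in> G \<Longrightarrow> s (x + y) = s x + s y"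
    and mult_G: "s \<in> G \<Longrightarrow> s (x * y) = s x * s y"

lemma finite_aut_group_imp_field_aut_group: "finite_aut_group F G \<Longrightarrow> field_aut_group G"
  by unfold_locales (auto simp: finite_aut_group_def F_automorphism_def)

context field_aut_group
begin

lemma additive_G: "s \<in> G \<Longrightarrow> additive s"
  by (simp add: additive_def add_G)

lemma zero_G [simp]: "s \<in> G \<Longrightarrow> s 0 = 0"
  using additive_G by (rule additive.zero)

lemma apply_sum_mult_G: "s \<in> G \<Longrightarrow> s (\<Sum>i\<in>A. f i * g i) = (\<Sum>i\<in>A. s (f i) * s (g i))"
  by (simp add: additive.sum[OF additive_G] mult_G)

lemma apply_inv_G [simp]: "s \<in> G \<Longrightarrow> s (inv s y) = y"
  using bij_G by (simp add: bij_is_surj surj_f_inv_f)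

lemma inv_comp_G [simp]: "s \<in> G \<Longrightarrow> inv s \<circ> s = id"
  using bij_G by (simp add: bij_is_inj)

lemma group_comp_monoid: "group (comp_monoid G)"
proof (rule groupI)
  show "\<exists>y\<in>carrier (comp_monoid G). y \<otimes>\<^bsub>comp_monoid G\<^esub> x = \<one>\<^bsub>comp_monoid G\<^esub>"
    if "x \<in> carrier (comp_monoid G)" for x
    using that inv_in_G by (auto simp: comp_monoid_def intro!: bexI[where x = "inv x"])
qed (auto simp: comp_monoid_def id_in_G comp_in_G comp_assoc)

lemma sum_comp_left:
  assumes "j \<in> G"
  shows "(\<Sum>k\<in>G. f (j \<circ> k)) = (\<Sum>k\<in>G. f k)"
proof -
  interpret Gr: group "comp_monoid G" by (rule group_comp_monoid)
  have inj: "inj_on ((\<circ>) j) G" and surj: "(\<circ>) j ` G = G"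
    using Gr.inj_on_cmult[of j] Gr.surj_const_mult[of j] assms unfolding comp_monoid_def by simp_all
  have "(\<Sum>k\<in>G. f (j \<circ> k)) = sum (f \<circ> (\<circ>) j) G" by (rule sum.cong) simp_all
  also have "\<dots> = sum f ((\<circ>) j ` G)" by (rule sum.reindex[OF inj, symmetric])
  finally show ?thesis unfolding surj .
qed

definition conjugate_kernel :: "'K \<Rightarrow> (('K \<Rightarrow> 'K) \<Rightarrow> 'K) set" where
  "conjugate_kernel z = {x. (\<forall>g. g \<notin> G \<longrightarrow> x g = 0) \<and> (\<forall>h\<in>G. (\<Sum>g\<in>G. (h \<circ> g) z * x g) = 0)}"

definition translate :: "('K \<Rightarrow> 'K) \<Rightarrow> (('K \<Rightarrow> 'K) \<Rightarrow> 'K) \<Rightarrow> ('K \<Rightarrow> 'K) \<Rightarrow> 'K" where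
  "translate k x g = (if g \<in> G then x (inv k \<circ> g) else 0)"

lemma translate_conjugate_kernel:
  assumes k: "k \<in> G" and x: "x \<in> conjugate_kernel z"
  shows "translate k x \<in> conjugate_kernel z"
proof -
  have "(\<Sum>g\<in>G. (h \<circ> g) z * translate k x g) = 0" if h: "h \<in> G" for h
  proof -
    have "(\<Sum>g\<in>G. (h \<circ> g) z * translate k x g) = (\<Sum>g\<in>G. (h \<circ> (k \<circ> g)) z * translate k x (k \<circ> g))"
      by (rule sum_comp_left[OF k, where f = "\<lambda>g. (h \<circ> g) z * translate k x g", symmetric])
    also have "\<dots> = (\<Sum>g\<in>G. ((h \<circ> k) \<circ> g) z * x g)"
      using k by (intro sum.cong refl) (simp add: translate_def comp_in_G o_assoc)
    also have "\<dots> = 0" using x comp_in_G[OF h k] unfolding conjugate_kernel_def by blast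
    finally show ?thesis .
  qed
  then show ?thesis by (simp add: conjugate_kernel_def translate_def)
qed

lemma additive_translate: "additive (translate k)"
  by (simp add: additive_def translate_def fun_eq_iff)

lemma translate_id: "x \<in> conjugate_kernel z \<Longrightarrow> translate id x = x"
  by (auto simp: translate_def conjugate_kernel_def fun_eq_iff)

lemma translate_comp: "j \<in> G \<Longrightarrow> k \<in> G \<Longrightarrow> translate (j \<circ> k) x = translate j (translate k x)"
  by (auto simp: translate_def fun_eq_iff o_inv_distrib bij_G inv_in_G comp_in_G o_assoc)

lemma translation_invariant_conjugate_kernel_eq_0:
  assumes trace: "(\<Sum>s\<in>G. s z) \<noteq> 0" and y: "y \<in> conjugate_kernel z"
    and invariant: "\<And>g. g \<in> G \<Longrightarrow> translate g y = y"
  shows "y = 0"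
proof -
  have y_const: "y g = y id" if "g \<in> G" for g
    using invariant[OF that] that by (metis translate_def inv_comp_G)
  have "y id * (\<Sum>s\<in>G. s z) = (\<Sum>g\<in>G. (id \<circ> g) z * y g)"
    by (simp add: sum_distrib_left y_const mult.commute)
  also have "\<dots> = 0" using y id_in_G unfolding conjugate_kernel_def by blast
  finally have "y id = 0" using trace by simp
  then have "y g = 0" for g
    using y y_const by (cases "g \<in> G") (auto simp: conjugate_kernel_def)
  then show ?thesis by (simp add: fun_eq_iff)
qed

theorem conjugate_kernel_trivial:
  assumes "prime p" and "CHAR('K) = p" and "card G = p ^ n" and trace: "(\<Sum>s\<in>G. s z) \<noteq> 0"
  shows "conjugate_kernel z = {0}"
proof (rule ccontr)
  interpret Gr: group "comp_monoid G" by (rule group_comp_monoid)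
  have zero_in_kernel: "0 \<in> conjugate_kernel z" by (simp add: conjugate_kernel_def)
  assume "conjugate_kernel z \<noteq> {0}"
  then obtain x where x: "x \<in> conjugate_kernel z" "x \<noteq> 0" using zero_in_kernel by blast
  obtain y where "y \<in> conjugate_kernel z" "y \<noteq> 0" "\<And>g. g \<in> G \<Longrightarrow> translate g y = y"
  proof (rule Gr.additive_action_nonzero_fixed_point[where act = translate and W = "conjugate_kernel z" and x = x])
    show "of_nat p = (0 :: ('K \<Rightarrow> 'K) \<Rightarrow> 'K)"
      using assms(2) of_nat_CHAR[where 'a = 'K] by (simp add: of_nat_fun zero_fun_def)
    show "u + w \<in> conjugate_kernel z" if "u \<in> conjugate_kernel z" "w \<in> conjugate_kernel z" for u w
      using that by (simp add: conjugate_kernel_def distrib_left sum.distrib)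
  qed (use assms x zero_in_kernel in \<open>auto simp: comp_monoid_def order_def additive_translate
      translate_conjugate_kernel translate_id translate_comp\<close>)
  then show False using translation_invariant_conjugate_kernel_eq_0[OF trace] by blast
qed

context
  fixes z :: 'K
  assumes kernel_trivial: "conjugate_kernel z = {0}"
begin

lemma conjugate_relation_trivial:
  assumes "\<forall>h\<in>G. (\<Sum>g\<in>G. (h \<circ> g) z * x g) = 0" and "g \<in> G"
  shows "x g = 0"
proof -
  have "(\<lambda>g. if g \<in> G then x g else 0) \<in> conjugate_kernel z"
    using assms(1) by (simp add: conjugate_kernel_def cong: sum.cong)
  then show ?thesis using kernel_trivial assms(2) by (auto simp: fun_eq_iff split: if_splits)
qed

lemma inj_on_conjugates: "inj_on (\<lambda>s. s z) G"
proof (rule inj_onI, rule ccontr)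
  fix g1 g2 assume g: "g1 \<in> G" "g2 \<in> G" "g1 z = g2 z" and "g1 \<noteq> g2"
  define x :: "('K \<Rightarrow> 'K) \<Rightarrow> 'K" where "x g = of_bool (g = g1) - of_bool (g = g2)" for g
  have "(\<Sum>g\<in>G. (h \<circ> g) z * x g) = h (g1 z) - h (g2 z)" for h
    using g finite_G by (simp add: x_def right_diff_distrib sum_subtractf)
  then have "x g1 = 0" using conjugate_relation_trivial g by simp
  then show False using \<open>g1 \<noteq> g2\<close> by (simp add: x_def)
qed

lemma sum_conjugates: "(\<Sum>b\<in>(\<lambda>s. s z) ` G. f b) = (\<Sum>g\<in>G. f (g z))"
  using sum.reindex[OF inj_on_conjugates] by simp

lemma lin_indep_conjugates: "lin_indep_over (fixed_field G) ((\<lambda>s. s z) ` G)"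
  unfolding lin_indep_over_def
proof (intro allI impI)
  fix S c
  assume "finite S \<and> S \<subseteq> (\<lambda>s. s z) ` G \<and> (\<forall>b\<in>S. c b \<in> fixed_field G) \<and> (\<Sum>b\<in>S. c b * b) = 0"
  then have S: "S \<subseteq> (\<lambda>s. s z) ` G" and c: "\<And>b. b \<in> S \<Longrightarrow> c b \<in> fixed_field G"
    and relation: "(\<Sum>b\<in>S. c b * b) = 0" by auto
  define x where "x g = (if g z \<in> S then c (g z) else 0)" for g
  have x_fixed: "s (x g) = x g" if "s \<in> G" for s g
    using c that by (simp add: x_def fixed_field_def)
  have "(\<Sum>g\<in>G. x g * g z) = (\<Sum>b\<in>(\<lambda>s. s z) ` G. if b \<in> S then c b * b else 0)"
    unfolding sum_conjugates x_def by (rule sum.cong) simp_all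
  also have "\<dots> = (\<Sum>b\<in>S. c b * b)"
    using S finite_G by (simp add: sum.inter_restrict[symmetric] Int_absorb1)
  finally have x_relation: "(\<Sum>g\<in>G. x g * g z) = 0" using relation by simp
  have "(\<Sum>g\<in>G. (h \<circ> g) z * x g) = 0" if h: "h \<in> G" for h
  proof -
    have "(\<Sum>g\<in>G. (h \<circ> g) z * x g) = h (\<Sum>g\<in>G. x g * g z)"
      using apply_sum_mult_G[OF h, of x "\<lambda>g. g z" G] h by (simp add: x_fixed mult.commute)
    then show ?thesis using h x_relation by simp
  qed
  then have "x g = 0" if "g \<in> G" for g using conjugate_relation_trivial that by blast
  then show "\<forall>b\<in>S. c b = 0" using S by (force simp: x_def)
qed

lemma conjugate_system_solution_fixed:
  assumes solution: "\<And>h. h \<in> G \<Longrightarrow> (\<Sum>g\<in>G. (h \<circ> g) z * x g) = h y"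
    and \<sigma>: "\<sigma> \<in> G" and g: "g \<in> G"
  shows "\<sigma> (x g) = x g"
proof -
  have "(\<Sum>g\<in>G. (h \<circ> g) z * (\<sigma> (x g) - x g)) = 0" if h: "h \<in> G" for h
  proof -
    have "(\<Sum>g\<in>G. (h \<circ> g) z * \<sigma> (x g)) = \<sigma> (\<Sum>g\<in>G. (inv \<sigma> \<circ> h \<circ> g) z * x g)"
      using apply_sum_mult_G[OF \<sigma>, of "\<lambda>g. (inv \<sigma> \<circ> h \<circ> g) z" x G] \<sigma> by simp
    also have "\<dots> = h y"
      using solution[of "inv \<sigma> \<circ> h"] \<sigma> h by (simp add: inv_in_G comp_in_G o_assoc)
    finally show ?thesis using solution[OF h] by (simp add: right_diff_distrib sum_subtractf)
  qed
  then have "\<sigma> (x g) - x g = 0"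
    using g by (intro conjugate_relation_trivial[where x = "\<lambda>g. \<sigma> (x g) - x g"]) auto
  then show ?thesis by simp
qed

lemma span_conjugates: "span_over (fixed_field G) ((\<lambda>s. s z) ` G) y"
proof -
  obtain x where solution: "\<And>h. h \<in> G \<Longrightarrow> (\<Sum>g\<in>G. (h \<circ> g) z * x g) = h y"
    using square_linear_system_solvable[OF finite_G, where A = "\<lambda>h g. (h \<circ> g) z" and b = "\<lambda>h. h y"]
      conjugate_relation_trivial by blast
  then have x_fixed: "x g \<in> fixed_field G" if "g \<in> G" for g
    using that conjugate_system_solution_fixed by (simp add: fixed_field_def)
  define c where "c b = x (the_inv_into G (\<lambda>s. s z) b)" for b
  have c_conj: "c (g z) = x g" if "g \<in> G" for g
    using the_inv_into_f_f[OF inj_on_conjugates that] by (simp add: c_def)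
  have "y = (\<Sum>g\<in>G. x g * g z)"
    using solution[OF id_in_G] by (simp add: mult.commute)
  also have "\<dots> = (\<Sum>b\<in>(\<lambda>s. s z) ` G. c b * b)"
    by (simp add: sum_conjugates c_conj)
  finally show ?thesis
    unfolding span_over_def using finite_G x_fixed c_conj
    by (intro exI[of _ "(\<lambda>s. s z) ` G"] exI[of _ c]) auto
qed

lemma basis_conjugates: "basis_over (fixed_field G) ((\<lambda>s. s z) ` G)"
  using lin_indep_conjugates span_conjugates by (simp add: basis_over_def)

end

end

theorem proposition3p1:
  fixes kk :: "'K::field set" and p :: nat and G :: "('K \<Rightarrow> 'K) set" and z :: 'K
  assumes "prime p" and "CHAR('K) = p"
    and "subfield kk" and "alg_closed_field kk" and "function_field_1 kk"
    and "finite_aut_group kk G" and "\<exists>n. card G = p ^ n"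
    and A: "\<forall>v. place kk v \<longrightarrow> (\<forall>s\<in>G. \<forall>t\<in>stab G v. s \<circ> t \<circ> inv s \<in> stab G v)"
    and B1: "\<forall>v. place kk v \<longrightarrow> z \<noteq> 0 \<longrightarrow> v z \<ge> - int (d_prime G v)"
    and B2: "trace_G G z \<noteq> 0"
  shows "basis_over (fixed_field G) ((\<lambda>s. s z) ` G)"
proof -
  interpret field_aut_group G
    using \<open>finite_aut_group kk G\<close> by (rule finite_aut_group_imp_field_aut_group)
  obtain n where "card G = p ^ n" using \<open>\<exists>n. card G = p ^ n\<close> ..
  then have "conjugate_kernel z = {0}"
    using conjugate_kernel_trivial \<open>prime p\<close> \<open>CHAR('K) = p\<close> B2 by (simp add: trace_G_def)
  then show ?thesis by (rule basis_conjugates)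
qed

end
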